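(* Let $A$ be a finite alphabet containing a distinguished element $0$, let $\nu$ be a shift-invariant probability measure on $A^{\mathbb{Z}}$, and let $\mathbf{Y}=(A^{\mathbb{Z}},\mathcal{B},\nu,S)$ with $S$ the left shift. Let $\tau$ be the cellular automaton $\tau((a_n)_n)=(\tau_0(a_n,a_{n+1}))_n$ with $\tau_0(\alpha_1,\alpha_2)=\alpha_1$ if $\alpha_1=\alpha_2$ and $0$ otherwise, and let $\xi$ be the coordinate process on $\mathbf{Y}$. Then for every $n\ge1$, $$h_\nu(\tau^n\xi,S)\le\frac{\log(\#A\, n^2)}{n}.$$
   Context: The coordinate process is $\xi_i(a)=a_i$; $\tau^n\xi$ is the process $((\tau^n a)_i)_{i\in\mathbb{Z}}$, i.e. the $S$-process generated by the finite-valued random variable $a\mapsto(\tau^na)_0$. For a finite-valued process $\eta$, $h_\nu(\eta,S)=\lim_n\frac1nH_\nu(\eta_{[0,n]})$ with $H_\nu$ Shannon entropy. *)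

theory Defs
  imports "HOL-Probability.Probability"
begin

definition lshift :: "(int \<Rightarrow> 'a) \<Rightarrow> int \<Rightarrow> 'a" where
  "lshift a = (\<lambda>i. a (i + 1))"

definition ca_tau :: "'a \<Rightarrow> (int \<Rightarrow> 'a) \<Rightarrow> int \<Rightarrow> 'a" where
  "ca_tau z a = (\<lambda>i. if a i = a (i + 1) then a i else z)"

definition shannon_entropy :: "'b measure \<Rightarrow> ('b \<Rightarrow> 'c) \<Rightarrow> real" where
  "shannon_entropy M X =
     - (\<Sum>x \<in> X ` space M. measure M (X -` {x} \<inter> space M) * ln (measure M (X -` {x} \<inter> space M)))"

definition process_entropy :: "'b measure \<Rightarrow> ('b \<Rightarrow> 'b) \<Rightarrow> ('b \<Rightarrow> 'c) \<Rightarrow> real" where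
  "process_entropy M S f =
     lim (\<lambda>m::nat. shannon_entropy M (\<lambda>a. \<lambda>i\<in>{0..m}. f ((S ^^ i) a)) / real m)"

end

theory Submission
  imports Defs
begin

(* Iterating the local rule gives (tau^n a)_i = a_i if a_i = a_(i+1) = ... = a_(i+n), and 0
   otherwise. So two nonzero symbols of tau^n a at distance at most n enclose a constant run, and
   every word of length n of tau^n a is 0 outside an interval on which it is constant: there are at
   most #A n^2 such words, which bounds the entropy of the n-block by log (#A n^2). Block entropies
   of a stationary process are subadditive, so by Fekete's lemma h_nu is the infimum of
   H(eta_[0,m)) / m over m >= 1, in particular at most the value at m = n. *)

context prob_space
begin

lemma information_space_exp_1: "information_space M (exp 1)"
  by (simp add: information_space_def information_space_axioms_def prob_space_axioms)

lemma shannon_entropy_eq_entropy: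
  assumes "simple_function M X"
  shows "shannon_entropy M X = entropy (exp 1) (count_space (X ` space M)) X"
proof -
  interpret information_space M "exp 1" by (rule information_space_exp_1)
  show ?thesis
    using entropy_simple_distributed[OF simple_distributedI[OF assms measure_nonneg refl]]
    by (simp add: shannon_entropy_def log_def)
qed

lemma shannon_entropy_nonneg: "0 \<le> shannon_entropy M X"
proof -
  have "prob A * ln (prob A) \<le> 0" for A
    by (cases "prob A = 0") (auto intro: mult_nonneg_nonpos simp: zero_less_measure_iff)
  then show ?thesis
    unfolding shannon_entropy_def neg_0_le_iff_le by (intro sum_nonpos) auto
qed

lemma shannon_entropy_le_ln_card:
  assumes "simple_function M X"
  shows "shannon_entropy M X \<le> ln (card (X ` space M))"
proof -
  interpret information_space M "exp 1" by (rule information_space_exp_1)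
  show ?thesis
    using entropy_le_card[OF simple_distributedI[OF assms measure_nonneg refl]]
    by (simp add: shannon_entropy_eq_entropy[OF assms] log_def)
qed

lemma shannon_entropy_le_ln_of_card_le:
  assumes "simple_function M X" "finite A" "X ` space M \<subseteq> A" "card A \<le> N"
  shows "shannon_entropy M X \<le> ln N"
proof -
  have "card (X ` space M) > 0"
    using assms(1) not_empty by (simp add: card_gt_0_iff simple_functionD(1))
  moreover have "card (X ` space M) \<le> N"
    using card_mono[OF assms(2,3)] assms(4) by (rule order_trans)
  ultimately have "ln (card (X ` space M)) \<le> ln N"
    by simp
  with shannon_entropy_le_ln_card[OF assms(1)] show ?thesis
    by (rule order_trans)
qed

lemma shannon_entropy_Pair_le:
  assumes "simple_function M X" "simple_function M Y"
  shows "shannon_entropy M (\<lambda>x. (X x, Y x)) \<le> shannon_entropy M X + shannon_entropy M Y"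
proof -
  interpret information_space M "exp 1" by (rule information_space_exp_1)
  show ?thesis
    using entropy_chain_rule[OF assms] conditional_entropy_less_eq_entropy[OF assms(2,1)]
    by (simp add: shannon_entropy_eq_entropy assms)
qed

lemma shannon_entropy_comp_le:
  assumes "simple_function M X"
  shows "shannon_entropy M (\<lambda>x. f (X x)) \<le> shannon_entropy M X"
proof -
  interpret information_space M "exp 1" by (rule information_space_exp_1)
  show ?thesis
    using entropy_data_processing[OF assms, of f]
    by (simp add: shannon_entropy_eq_entropy assms simple_function_compose1 comp_def)
qed

end

lemma shannon_entropy_distr:
  assumes T: "T \<in> M \<rightarrow>\<^sub>M N" and X: "simple_function N X"
  shows "shannon_entropy M (\<lambda>x. X (T x)) = shannon_entropy (distr M N T) X"
proof -
  let ?h = "\<lambda>p. p * ln p"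
  have empty: "(\<lambda>x. X (T x)) -` {y} \<inter> space M = {}" if "y \<notin> (\<lambda>x. X (T x)) ` space M" for y
    using that by blast
  have "shannon_entropy M (\<lambda>x. X (T x)) =
      - (\<Sum>y\<in>X ` space N. ?h (measure M ((\<lambda>x. X (T x)) -` {y} \<inter> space M)))"
    unfolding shannon_entropy_def
    using simple_functionD(1)[OF X] measurable_space[OF T]
    by (intro arg_cong[where f=uminus] sum.mono_neutral_left) (auto simp: empty)
  also have "\<dots> = - (\<Sum>y\<in>X ` space N. ?h (measure (distr M N T) (X -` {y} \<inter> space N)))"
    using simple_functionD(2)[OF X] T
    by (intro arg_cong[where f=uminus] sum.cong refl arg_cong[where f="?h"])
       (auto simp: measure_distr intro!: arg_cong[where f="measure M"] dest: measurable_space)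
  finally show ?thesis
    by (simp add: shannon_entropy_def)
qed

lemma distr_funpow_eq:
  assumes "T \<in> M \<rightarrow>\<^sub>M M" "distr M M T = M"
  shows "distr M M (T ^^ k) = M"
proof (induction k)
  case (Suc k)
  have "distr M M (T ^^ Suc k) = distr (distr M M (T ^^ k)) M T"
    using assms(1) by (simp add: distr_distr measurable_compose_n)
  also have "\<dots> = M"
    using Suc assms(2) by simp
  finally show ?case .
qed (simp add: distr_id2)

lemma fekete_subadditive:
  fixes b :: "nat \<Rightarrow> real"
  assumes sub: "\<And>m k. b (m + k) \<le> b m + b k" and nonneg: "\<And>m. 0 \<le> b m"
  shows "(\<lambda>m. b m / m) \<longlonglongrightarrow> (INF m\<in>{1..}. b m / m)"
proof -
  have bdd: "bdd_below ((\<lambda>m. b m / m) ` {1..})"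
    by (rule bdd_belowI[of _ 0]) (auto simp: nonneg)
  show ?thesis
  proof (rule order_tendstoI)
    fix a
    assume "a < (INF m\<in>{1..}. b m / m)"
    then have "a < b m / m" if "m \<ge> 1" for m
      using cINF_lower[OF bdd, of m] that by simp
    then show "\<forall>\<^sub>F m in sequentially. a < b m / m"
      by (rule eventually_mono[OF eventually_ge_at_top[of 1]])
  next
    fix a
    assume "(INF m\<in>{1..}. b m / m) < a"
    then obtain k where k: "k \<ge> 1" "b k / k < a"
      using cInf_less_iff[OF _ bdd] by auto
    define B where "B = Max (b ` {..<k})"
    have mult: "b (q * k + r) \<le> q * b k + b r" for q r
    proof (induction q)
      case (Suc q)
      have "b (Suc q * k + r) \<le> b k + b (q * k + r)"
        using sub[of k "q * k + r"] by (simp add: algebra_simps)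
      with Suc show ?case
        by (simp add: algebra_simps)
    qed simp
    have bound: "b m / m \<le> b k / k + B / m" if "m \<ge> 1" for m
    proof -
      have "b m \<le> (m div k) * b k + b (m mod k)"
        using mult[of "m div k" "m mod k"] by simp
      also have "b (m mod k) \<le> B"
        unfolding B_def using k(1) by (intro Max_ge) auto
      also have "real (m div k) * b k \<le> m / k * b k"
        using nonneg[of k] k(1) of_nat_div_le_of_nat[of m k] by (intro mult_right_mono) auto
      finally show ?thesis
        using that by (simp add: field_simps)
    qed
    have "(\<lambda>m. B / real m) \<longlonglongrightarrow> 0"
      by (rule tendsto_divide_0[OF tendsto_const
            filterlim_at_top_imp_at_infinity[OF filterlim_real_sequentially]])
    then have "\<forall>\<^sub>F m in sequentially. B / m < a - b k / k"
      using k(2) by (intro order_tendstoD) auto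
    then show "\<forall>\<^sub>F m in sequentially. b m / m < a"
      using eventually_ge_at_top[of 1] by eventually_elim (use bound in fastforce)
  qed
qed

lemma simple_function_restrict:
  fixes g :: "'a \<Rightarrow> 'i \<Rightarrow> 'c::finite"
  assumes I: "finite I" and g: "\<And>i. i \<in> I \<Longrightarrow> (\<lambda>x. g x i) \<in> M \<rightarrow>\<^sub>M count_space UNIV"
  shows "simple_function M (\<lambda>x. \<lambda>i\<in>I. g x i)"
  unfolding simple_function_def
proof
  show "finite ((\<lambda>x. \<lambda>i\<in>I. g x i) ` space M)"
    by (rule finite_subset[of _ "I \<rightarrow>\<^sub>E UNIV"]) (auto simp: I finite_PiE)
  have G: "(\<lambda>x. \<lambda>i\<in>I. g x i) \<in> M \<rightarrow>\<^sub>M PiM I (\<lambda>_. count_space UNIV)"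
    using g by (rule measurable_restrict)
  show "\<forall>w\<in>(\<lambda>x. \<lambda>i\<in>I. g x i) ` space M. (\<lambda>x. \<lambda>i\<in>I. g x i) -` {w} \<inter> space M \<in> sets M"
  proof
    fix w
    assume "w \<in> (\<lambda>x. \<lambda>i\<in>I. g x i) ` space M"
    then have "w \<in> extensional I"
      by auto
    then have "{w} = PiE I (\<lambda>i. {w i})"
      by (simp add: PiE_singleton)
    then have "{w} \<in> sets (PiM I (\<lambda>_. count_space UNIV))"
      using I by (simp add: sets_PiM_I_finite)
    then show "(\<lambda>x. \<lambda>i\<in>I. g x i) -` {w} \<inter> space M \<in> sets M"
      by (rule measurable_sets[OF G])
  qed
qed

definition block_entropy :: "'a measure \<Rightarrow> ('a \<Rightarrow> 'a) \<Rightarrow> ('a \<Rightarrow> 'c) \<Rightarrow> nat \<Rightarrow> real" where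
  "block_entropy M T f m = shannon_entropy M (\<lambda>x. \<lambda>i\<in>{..<m}. f ((T ^^ i) x))"

locale finite_stationary_process = prob_space M for M :: "'a measure" +
  fixes T :: "'a \<Rightarrow> 'a" and f :: "'a \<Rightarrow> 'c::finite"
  assumes T_measurable: "T \<in> M \<rightarrow>\<^sub>M M" and T_preserving: "distr M M T = M"
    and f_measurable: "f \<in> M \<rightarrow>\<^sub>M count_space UNIV"
begin

lemma simple_function_block: "simple_function M (\<lambda>x. \<lambda>i\<in>{..<m}. f ((T ^^ i) x))"
  using f_measurable T_measurable by (intro simple_function_restrict) auto

lemma block_entropy_nonneg: "0 \<le> block_entropy M T f m"
  unfolding block_entropy_def by (rule shannon_entropy_nonneg)

lemma block_entropy_add_le:
  "block_entropy M T f (m + k) \<le> block_entropy M T f m + block_entropy M T f k"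
proof -
  define blk where "blk l = (\<lambda>x. \<lambda>i\<in>{..<l}. f ((T ^^ i) x))" for l
  define join :: "(nat \<Rightarrow> 'c) \<times> (nat \<Rightarrow> 'c) \<Rightarrow> nat \<Rightarrow> 'c" where
    "join = (\<lambda>(u, v). \<lambda>i\<in>{..<m + k}. if i < m then u i else v (i - m))"
  have funpow_apply_add: "(T ^^ i) ((T ^^ j) x) = (T ^^ (i + j)) x" for i j x
    by (simp add: funpow_add)
  have blk_add: "blk (m + k) x = join (blk m x, blk k ((T ^^ m) x))" for x
    by (auto simp: blk_def join_def funpow_apply_add fun_eq_iff)
  have simple: "simple_function M (blk l)" for l
    unfolding blk_def by (rule simple_function_block)
  have simple_shifted: "simple_function M (\<lambda>x. blk k ((T ^^ m) x))"
    using T_measurable by (intro simple_function_comp[OF _ simple]) simp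
  have "block_entropy M T f (m + k) = shannon_entropy M (\<lambda>x. join (blk m x, blk k ((T ^^ m) x)))"
    by (simp add: block_entropy_def blk_def[symmetric] blk_add[symmetric])
  also have "\<dots> \<le> shannon_entropy M (\<lambda>x. (blk m x, blk k ((T ^^ m) x)))"
    using simple simple_shifted by (intro shannon_entropy_comp_le) simp
  also have "\<dots> \<le> shannon_entropy M (blk m) + shannon_entropy M (\<lambda>x. blk k ((T ^^ m) x))"
    using simple simple_shifted by (rule shannon_entropy_Pair_le)
  also have "shannon_entropy M (\<lambda>x. blk k ((T ^^ m) x)) = shannon_entropy M (blk k)"
    using shannon_entropy_distr[OF measurable_compose_n[OF T_measurable] simple]
    by (simp add: distr_funpow_eq[OF T_measurable T_preserving])
  finally show ?thesis
    by (simp only: block_entropy_def blk_def)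
qed

(* process_entropy divides the entropy of the m + 1 symbols indexed by {0..m} by m; the
   correction factor (m + 1) / m tends to 1. *)
lemma process_entropy_eq_Inf:
  "process_entropy M T f = (INF m\<in>{1..}. block_entropy M T f m / m)"
proof -
  let ?h = "\<lambda>m. block_entropy M T f m / m"
  have "?h \<longlonglongrightarrow> (INF m\<in>{1..}. ?h m)"
    using block_entropy_add_le block_entropy_nonneg by (rule fekete_subadditive)
  then have "(\<lambda>m. ?h (Suc m) * (Suc m / m)) \<longlonglongrightarrow> (INF m\<in>{1..}. ?h m) * 1"
    by (intro tendsto_mult LIMSEQ_Suc LIMSEQ_Suc_n_over_n)
  moreover have "(\<lambda>m. ?h (Suc m) * (Suc m / m)) =
      (\<lambda>m. shannon_entropy M (\<lambda>x. \<lambda>i\<in>{0..m}. f ((T ^^ i) x)) / m)"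
    by (auto simp: fun_eq_iff block_entropy_def atLeast0AtMost lessThan_Suc_atMost
        simp del: of_nat_Suc)
  ultimately show ?thesis
    unfolding process_entropy_def by (simp add: limI)
qed

lemma process_entropy_le_block_entropy:
  assumes "m \<ge> 1"
  shows "process_entropy M T f \<le> block_entropy M T f m / m"
  unfolding process_entropy_eq_Inf using assms block_entropy_nonneg
  by (intro cINF_lower bdd_belowI[of _ 0]) auto

end

definition interval_words :: "'a \<Rightarrow> nat \<Rightarrow> (nat \<Rightarrow> 'a) set" where
  "interval_words z n =
     (\<lambda>(c, p, q). \<lambda>i\<in>{..<n}. if p \<le> i \<and> i \<le> q then c else z) ` (UNIV \<times> {..<n} \<times> {..<n})"

lemma finite_interval_words: "finite (interval_words (z :: 'a::finite) n)"
  by (simp add: interval_words_def)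

lemma card_interval_words: "card (interval_words (z :: 'a::finite) n) \<le> CARD('a) * n\<^sup>2"
proof -
  have "card (interval_words z n) \<le> card (UNIV \<times> {..<n} \<times> {..<n} :: ('a \<times> nat \<times> nat) set)"
    unfolding interval_words_def by (rule card_image_le) simp
  also have "\<dots> = CARD('a) * n\<^sup>2"
    by (simp add: card_cartesian_product power2_eq_square)
  finally show ?thesis .
qed

lemma restrict_in_interval_words:
  assumes "n \<ge> 1"
    and between: "\<And>i j k. i \<le> k \<Longrightarrow> k \<le> j \<Longrightarrow> j < n \<Longrightarrow> w i \<noteq> z \<Longrightarrow> w j \<noteq> z \<Longrightarrow> w k = w i"
  shows "restrict w {..<n} \<in> interval_words z n"
proof (cases "\<exists>i<n. w i \<noteq> z")
  case False
  then have "restrict w {..<n} = (\<lambda>i\<in>{..<n}. z)"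
    by auto
  then show ?thesis
    using assms(1) unfolding interval_words_def by (intro image_eqI[where x="(z, 0, 0)"]) auto
next
  case True
  define S where "S = {i. i < n \<and> w i \<noteq> z}"
  define p where "p = Min S"
  define q where "q = Max S"
  have S: "finite S" "S \<noteq> {}"
    using True by (auto simp: S_def)
  have "p \<in> S" "q \<in> S" and bounds: "\<And>i. i \<in> S \<Longrightarrow> p \<le> i \<and> i \<le> q"
    using S by (auto simp: p_def q_def)
  have "restrict w {..<n} = (\<lambda>i\<in>{..<n}. if p \<le> i \<and> i \<le> q then w p else z)"
  proof (rule restrict_ext)
    fix i
    assume "i \<in> {..<n}"
    show "w i = (if p \<le> i \<and> i \<le> q then w p else z)"
    proof (cases "p \<le> i \<and> i \<le> q")
      case True
      then show ?thesis
        using between[of p i q] \<open>p \<in> S\<close> \<open>q \<in> S\<close> by (simp add: S_def)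
    next
      case False
      then have "i \<notin> S"
        using bounds by blast
      then have "w i = z"
        using \<open>i \<in> {..<n}\<close> by (simp add: S_def)
      then show ?thesis
        by (simp only: if_not_P[OF False])
    qed
  qed
  then show ?thesis
    using \<open>q \<in> S\<close> \<open>p \<in> S\<close> unfolding interval_words_def S_def
    by (intro image_eqI[where x="(w p, p, q)"]) auto
qed

lemma lshift_funpow: "(lshift ^^ k) a = (\<lambda>i. a (i + int k))"
  by (induction k) (auto simp: lshift_def algebra_simps)

lemma ca_tau_lshift: "ca_tau z (lshift a) = lshift (ca_tau z a)"
  by (simp add: ca_tau_def lshift_def add_ac)

lemma ca_tau_funpow_lshift_funpow:
  "(ca_tau z ^^ n) ((lshift ^^ k) a) = (lshift ^^ k) ((ca_tau z ^^ n) a)"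
proof -
  have "(ca_tau z ^^ n) (lshift a) = lshift ((ca_tau z ^^ n) a)" for a
    by (induction n) (simp_all add: ca_tau_lshift)
  then show ?thesis
    by (induction k) simp_all
qed

lemma ca_tau_funpow:
  "(ca_tau z ^^ n) a i = (if \<forall>t\<le>n. a (i + int t) = a i then a i else z)"
proof (induction n arbitrary: i)
  case (Suc n)
  let ?T = "(ca_tau z ^^ n) a"
  have run_Suc: "(\<forall>t\<le>Suc n. a (i + int t) = a i) \<longleftrightarrow>
      (\<forall>t\<le>n. a (i + int t) = a i) \<and> (\<forall>t\<le>n. a (i + 1 + int t) = a (i + 1)) \<and> a (i + 1) = a i"
  proof
    assume run: "\<forall>t\<le>Suc n. a (i + int t) = a i"
    have "a (i + 1 + int t) = a i" if "t \<le> n" for t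
      using that run[rule_format, of "Suc t"] by (simp add: add.assoc)
    moreover have "a (i + 1) = a i"
      using run[rule_format, of 1] by simp
    ultimately show "(\<forall>t\<le>n. a (i + int t) = a i) \<and> (\<forall>t\<le>n. a (i + 1 + int t) = a (i + 1)) \<and>
        a (i + 1) = a i"
      using run by simp
  next
    assume run': "(\<forall>t\<le>n. a (i + int t) = a i) \<and> (\<forall>t\<le>n. a (i + 1 + int t) = a (i + 1)) \<and>
        a (i + 1) = a i"
    show "\<forall>t\<le>Suc n. a (i + int t) = a i"
    proof (intro allI impI)
      fix t
      assume "t \<le> Suc n"
      then show "a (i + int t) = a i"
        using run' by (cases t) (simp_all add: add.assoc)
    qed
  qed
  have step: "(ca_tau z ^^ Suc n) a i = (if ?T i = ?T (i + 1) then ?T i else z)"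
    by (simp add: ca_tau_def)
  show ?case
  proof (cases "(\<forall>t\<le>n. a (i + int t) = a i) \<and> (\<forall>t\<le>n. a (i + 1 + int t) = a (i + 1))")
    case True
    then have "?T i = a i" "?T (i + 1) = a (i + 1)"
      using Suc.IH by simp_all
    then show ?thesis
      unfolding step run_Suc using True by simp
  next
    case False
    then have "?T i = z \<or> ?T (i + 1) = z"
      using Suc.IH by (metis (full_types))
    then have "(if ?T i = ?T (i + 1) then ?T i else z) = z"
      by auto
    moreover have "\<not> (\<forall>t\<le>Suc n. a (i + int t) = a i)"
      using False unfolding run_Suc by blast
    ultimately show ?thesis
      unfolding step by argo
  qed
qed simp

lemma measurable_ca_tau_funpow:
  "(\<lambda>a. (ca_tau z ^^ n) a i) \<in> PiM UNIV (\<lambda>_. count_space UNIV) \<rightarrow>\<^sub>M count_space (UNIV :: 'a::finite set)"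
  unfolding ca_tau_funpow by measurable

lemma ca_tau_funpow_eq_between:
  assumes "(ca_tau z ^^ n) a i \<noteq> z" "(ca_tau z ^^ n) a j \<noteq> z"
    and "i \<le> k" "k \<le> j" "j \<le> i + int n"
  shows "(ca_tau z ^^ n) a k = (ca_tau z ^^ n) a i"
proof -
  have run_i: "\<forall>t\<le>n. a (i + int t) = a i" and run_j: "\<forall>t\<le>n. a (j + int t) = a j"
    using assms(1,2) by (simp_all add: ca_tau_funpow split: if_splits)
  have "a j = a i"
    using run_i[rule_format, of "nat (j - i)"] assms(3-5) by simp
  then have const: "a s = a i" if "i \<le> s" "s \<le> j + int n" for s
    using that assms(5) run_i[rule_format, of "nat (s - i)"] run_j[rule_format, of "nat (s - j)"]
    by (cases "s \<le> i + int n") simp_all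
  have "a (k + int t) = a k" if "t \<le> n" for t
    using that assms(3,4) const[of k] const[of "k + int t"] by simp
  then have "(ca_tau z ^^ n) a k = a k"
    by (simp add: ca_tau_funpow)
  also have "a k = a i"
    using assms(3,4) const[of k] by simp
  also have "a i = (ca_tau z ^^ n) a i"
    using run_i by (simp add: ca_tau_funpow)
  finally show ?thesis .
qed

lemma ca_tau_funpow_window_in_interval_words:
  assumes "n \<ge> 1"
  shows "(\<lambda>i\<in>{..<n}. (ca_tau z ^^ n) a (int i)) \<in> interval_words z n"
proof (rule restrict_in_interval_words[OF assms])
  fix i j k :: nat
  assume "i \<le> k" "k \<le> j" "j < n"
    and "(ca_tau z ^^ n) a (int i) \<noteq> z" "(ca_tau z ^^ n) a (int j) \<noteq> z"
  then show "(ca_tau z ^^ n) a (int k) = (ca_tau z ^^ n) a (int i)"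
    by (intro ca_tau_funpow_eq_between[where i = "int i" and j = "int j"]) simp_all
qed

theorem proposition4p1:
  fixes \<nu> :: "(int \<Rightarrow> 'a::finite) measure" and z :: 'a and n :: nat
  assumes "prob_space \<nu>"
    and "sets \<nu> = sets (PiM UNIV (\<lambda>_. count_space UNIV))"
    and "lshift \<in> \<nu> \<rightarrow>\<^sub>M \<nu>"
    and "distr \<nu> \<nu> lshift = \<nu>"
    and "n \<ge> 1"
  shows "process_entropy \<nu> lshift (\<lambda>a. ((ca_tau z) ^^ n) a 0)
           \<le> ln (real CARD('a) * (real n)\<^sup>2) / real n"
proof -
  let ?W = "\<lambda>a. \<lambda>i\<in>{..<n}. (ca_tau z ^^ n) a (int i)"
  have "(\<lambda>a. (ca_tau z ^^ n) a 0) \<in> \<nu> \<rightarrow>\<^sub>M count_space UNIV"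
    using measurable_ca_tau_funpow unfolding measurable_cong_sets[OF assms(2) refl] .
  then interpret finite_stationary_process \<nu> lshift "\<lambda>a. (ca_tau z ^^ n) a 0"
    using assms(1,3,4)
    by (simp add: finite_stationary_process_def finite_stationary_process_axioms_def)
  have block: "(\<lambda>x. \<lambda>i\<in>{..<n}. (ca_tau z ^^ n) ((lshift ^^ i) x) 0) = ?W"
    unfolding ca_tau_funpow_lshift_funpow unfolding lshift_funpow by simp
  have W_simple: "simple_function \<nu> ?W"
    using simple_function_block[of n] by (simp only: block)
  have "?W ` space \<nu> \<subseteq> interval_words z n"
    by (intro image_subsetI ca_tau_funpow_window_in_interval_words[OF assms(5)])
  then have W_entropy: "shannon_entropy \<nu> ?W \<le> ln (real (CARD('a) * n\<^sup>2))"
    by (rule shannon_entropy_le_ln_of_card_le[OF W_simple finite_interval_words _ card_interval_words])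
  have "process_entropy \<nu> lshift (\<lambda>a. (ca_tau z ^^ n) a 0) \<le> shannon_entropy \<nu> ?W / n"
    using process_entropy_le_block_entropy[OF assms(5)] by (simp add: block_entropy_def block)
  also have "\<dots> \<le> ln (real (CARD('a) * n\<^sup>2)) / n"
    using W_entropy by (rule divide_right_mono) simp
  finally show ?thesis
    by simp
qed

end
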